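(* Let $n\ge2$ and $D_0>0$, and assume $\alpha>(n-1)\beta>0$. Let $p^a\in\mathbb{R}^n_{\ge0}$. Define the $n\times n$ matrix $A_n=(\alpha+\beta)I_n-\beta J_n$ (diagonal entries $\alpha$, off-diagonal entries $-\beta$), and let $E_n$ be the all-ones vector in $\mathbb{R}^n$. Consider the ex ante regulation game restricted to profiles with strictly positive demands. Among such profiles, a pure-strategy Nash equilibrium exists if and only if every entry of the vector $$(A_n+2\alpha I_n)^{-1}\,[D_0E_n+A_np^a]$$ is strictly positive. When this holds: - for every choice of the payment vector $p^d\in\mathbb{R}^n$ there is exactly one such equilibrium, so the equilibrium is unique up to a free choice of $p^d$; - there are constants $g_i,h_i$, depending only on $p^a,D_0,\alpha,\beta$, such that at equilibrium $p^s_i=g_i-p^d_i$ and $p^c_i=h_i+p^d_i$ for each $i$; - the net internaut price $p^s_i+p^c_i=g_i+h_i$ for each CP $i$ is unique and independent of $p^d$; - the equilibrium demand vector is unique and does not depend on $p^d$; - the revenues per unit demand, and hence the total revenues of the ISP and of every CP, do not depend on $p^d$.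
   Context: Setting: one ISP and $n$ content providers CP $1,\dots,n$. - $p^s=(p^s_1,\dots,p^s_n)$ are the ISP's prices per unit demand to internauts of CP $i$; $p^s$ is chosen by the ISP. - $p^c_i$ is CP $i$'s price per unit demand to its internauts, chosen by CP $i$. - $p^d_i$ is the payment per unit demand from CP $i$ to the ISP. - $p^a_i\ge0$ is CP $i$'s advertising revenue per unit demand. On the set of profiles where all demands are strictly positive, the demand for CP $i$'s content is $$d_i=D_0-\alpha(p^s_i+p^c_i)+\beta\sum_{j\ne i}(p^s_j+p^c_j).$$ Payoffs are $U_{ISP}=\sum_i d_i(p^s_i+p^d_i)$ and $U_{CP,i}=d_i(p^c_i+p^a_i-p^d_i)$. Ex ante regulation game: 1. A regulator first sets the vector $p^d$. 2. Then the ISP chooses $p^s$ and each CP $i$ chooses $p^c_i$, all simultaneously. 3. Internauts generate the demands. Strategies are jointly constrained so that all $d_i>0$. An equilibrium is a profile in this set from which no player can profitably deviate unilaterally while remaining in the set. The regulator chooses each $p^d_i$ to maximize $\big(d_i(p^s_i+p^d_i)\big)^{\gamma_i}\big(d_i(p^c_i+p^a_i-p^d_i)\big)^{1-\gamma_i}$ at the induced equilibrium, with weights $\gamma_i\in(0,1)$. *)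

theory Defs
  imports "HOL-Analysis.Analysis"
begin

text \<open>CPs are indexed by a finite type 'n (n = CARD('n)). Vectors are real^'n.\<close>

definition demand :: "real \<Rightarrow> real \<Rightarrow> real \<Rightarrow> real^'n \<Rightarrow> real^'n \<Rightarrow> 'n::finite \<Rightarrow> real" where
  "demand D0 \<alpha> \<beta> ps pc i =
     D0 - \<alpha> * (ps$i + pc$i) + \<beta> * (\<Sum>j\<in>UNIV - {i}. ps$j + pc$j)"

definition feasible :: "real \<Rightarrow> real \<Rightarrow> real \<Rightarrow> real^'n::finite \<Rightarrow> real^'n \<Rightarrow> bool" where
  "feasible D0 \<alpha> \<beta> ps pc \<longleftrightarrow> (\<forall>i. demand D0 \<alpha> \<beta> ps pc i > 0)"

definition U_ISP :: "real \<Rightarrow> real \<Rightarrow> real \<Rightarrow> real^'n::finite \<Rightarrow> real^'n \<Rightarrow> real^'n \<Rightarrow> real" where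
  "U_ISP D0 \<alpha> \<beta> pd ps pc = (\<Sum>i\<in>UNIV. demand D0 \<alpha> \<beta> ps pc i * (ps$i + pd$i))"

definition U_CP :: "real \<Rightarrow> real \<Rightarrow> real \<Rightarrow> real^'n \<Rightarrow> real^'n \<Rightarrow> real^'n \<Rightarrow> real^'n \<Rightarrow> 'n::finite \<Rightarrow> real" where
  "U_CP D0 \<alpha> \<beta> pa pd ps pc i = demand D0 \<alpha> \<beta> ps pc i * (pc$i + pa$i - pd$i)"

text \<open>Nash equilibrium of the pricing stage (for a given p^d set by the regulator),
  among profiles with strictly positive demands; deviations must stay in that set.\<close>
definition is_equilibrium ::
  "real \<Rightarrow> real \<Rightarrow> real \<Rightarrow> real^'n \<Rightarrow> real^'n \<Rightarrow> real^'n \<Rightarrow> real^'n::finite \<Rightarrow> bool" where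
  "is_equilibrium D0 \<alpha> \<beta> pa pd ps pc \<longleftrightarrow>
     feasible D0 \<alpha> \<beta> ps pc \<and>
     (\<forall>ps'. feasible D0 \<alpha> \<beta> ps' pc \<longrightarrow> U_ISP D0 \<alpha> \<beta> pd ps' pc \<le> U_ISP D0 \<alpha> \<beta> pd ps pc) \<and>
     (\<forall>i c. let pc' = (\<chi> j. if j = i then c else pc$j) in
        feasible D0 \<alpha> \<beta> ps pc' \<longrightarrow> U_CP D0 \<alpha> \<beta> pa pd ps pc' i \<le> U_CP D0 \<alpha> \<beta> pa pd ps pc i)"

definition A_mat :: "real \<Rightarrow> real \<Rightarrow> real^'n^'n::finite" where
  "A_mat \<alpha> \<beta> = (\<alpha> + \<beta>) *\<^sub>R mat 1 - \<beta> *\<^sub>R (\<chi> i j. 1)"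

definition E_vec :: "real^'n::finite" where
  "E_vec = vec 1"

end

theory Submission
  imports Defs
begin

text \<open>Demand depends on the prices only through \<open>p\<^sup>s + p\<^sup>c\<close>, and each player's payoff is a
  concave quadratic in its own prices; for the ISP this is because \<open>A\<^sub>n\<close> is positive semidefinite
  when \<open>\<alpha> \<ge> (n - 1) \<beta>\<close>. As feasibility is an open condition, equilibria are exactly the feasible
  profiles satisfying the first-order conditions \<open>d = A\<^sub>n (p\<^sup>s + p\<^sup>d)\<close> and
  \<open>d = \<alpha> (p\<^sup>c + p\<^sup>a - p\<^sup>d)\<close>. In the margins \<open>r = p\<^sup>s + p\<^sup>d\<close> and \<open>s = p\<^sup>c + p\<^sup>a - p\<^sup>d\<close> these
  conditions no longer involve \<open>p\<^sup>d\<close> and have the unique solution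
  \<open>(A\<^sub>n + 2\<alpha> I) s = D\<^sub>0 E\<^sub>n + A\<^sub>n p\<^sup>a\<close>, \<open>A\<^sub>n r = \<alpha> s\<close>; the demand is then \<open>\<alpha> s\<close>, so feasibility
  means \<open>s > 0\<close>.\<close>

lemma A_mat_shift_mult_nth:
  fixes v :: "real^'n::finite"
  shows "((A_mat \<alpha> \<beta> + k *\<^sub>R mat 1) *v v) $ i = (\<alpha> + \<beta> + k) * v $ i - \<beta> * sum (($) v) UNIV"
proof -
  have "((A_mat \<alpha> \<beta> + k *\<^sub>R mat 1) *v v) $ i
      = (\<Sum>j\<in>UNIV. (if i = j then (\<alpha> + \<beta> + k) * v $ j else 0) - \<beta> * v $ j)"
    unfolding A_mat_def matrix_vector_mult_def by (auto simp: mat_def algebra_simps intro!: sum.cong)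
  then show ?thesis
    by (simp add: sum_subtractf sum_distrib_left)
qed

lemma A_mat_mult_nth:
  fixes v :: "real^'n::finite"
  shows "(A_mat \<alpha> \<beta> *v v) $ i = (\<alpha> + \<beta>) * v $ i - \<beta> * sum (($) v) UNIV"
  using A_mat_shift_mult_nth[of \<alpha> \<beta> 0 v i] by simp

lemma A_mat_shift_mult:
  fixes v :: "real^'n::finite"
  shows "(A_mat \<alpha> \<beta> + k *\<^sub>R mat 1) *v v = A_mat \<alpha> \<beta> *v v + k *\<^sub>R v"
  by (simp add: matrix_vector_mult_add_rdistrib scaleR_matrix_vector_assoc[symmetric])

lemma A_mat_mult_axis_nth:
  "(A_mat \<alpha> \<beta> *v axis k t) $ j = (if j = k then \<alpha> * t else - \<beta> * t)"
  for k :: "'n::finite"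
  by (simp add: A_mat_mult_nth axis_def algebra_simps)

lemma transpose_A_mat [simp]: "transpose (A_mat \<alpha> \<beta>) = (A_mat \<alpha> \<beta> :: real^'n::finite^'n)"
  by (simp add: A_mat_def transpose_def mat_def vec_eq_iff)

lemma inner_A_mat_mult_commute:
  fixes x y :: "real^'n::finite"
  shows "inner (A_mat \<alpha> \<beta> *v x) y = inner x (A_mat \<alpha> \<beta> *v y)"
  by (metis dot_lmul_matrix transpose_A_mat vector_transpose_matrix)

lemma inner_A_mat_mult_self:
  fixes h :: "real^'n::finite"
  shows "inner h (A_mat \<alpha> \<beta> *v h) = (\<alpha> + \<beta>) * (\<Sum>j\<in>UNIV. (h $ j)\<^sup>2) - \<beta> * (sum (($) h) UNIV)\<^sup>2"
  by (simp add: inner_vec_def A_mat_mult_nth algebra_simps power2_eq_square sum_subtractf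
      sum_distrib_left sum_distrib_right)

lemma A_mat_psd:
  fixes h :: "real^'n::finite"
  assumes "\<beta> \<ge> 0" "(real CARD('n) - 1) * \<beta> \<le> \<alpha>"
  shows "inner h (A_mat \<alpha> \<beta> *v h) \<ge> 0"
proof -
  have "\<beta> * (sum (($) h) UNIV)\<^sup>2 \<le> \<beta> * (real CARD('n) * (\<Sum>j\<in>UNIV. (h $ j)\<^sup>2))"
    using sum_squared_le_sum_of_squares[of "($) h" UNIV] assms(1) by (simp add: mult_left_mono mult.commute)
  also have "\<dots> = (\<beta> * real CARD('n)) * (\<Sum>j\<in>UNIV. (h $ j)\<^sup>2)"
    by simp
  also have "\<dots> \<le> (\<alpha> + \<beta>) * (\<Sum>j\<in>UNIV. (h $ j)\<^sup>2)"
    using assms(2) by (intro mult_right_mono) (auto simp: algebra_simps sum_nonneg)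
  finally show ?thesis
    by (simp add: inner_A_mat_mult_self)
qed

lemma inner_axis_A_mat_mult_axis: "inner (axis k t) (A_mat \<alpha> \<beta> *v axis k t) = \<alpha> * t\<^sup>2"
  for k :: "'n::finite"
  by (simp add: inner_axis' A_mat_mult_axis_nth power2_eq_square)

lemma invertible_A_mat_shift:
  assumes "\<alpha> + \<beta> + k \<noteq> 0" "\<alpha> + \<beta> + k \<noteq> real CARD('n) * \<beta>"
  shows "invertible (A_mat \<alpha> \<beta> + k *\<^sub>R mat 1 :: real^'n::finite^'n)"
  unfolding invertible_left_inverse matrix_left_invertible_ker
proof (intro allI impI)
  fix v :: "real^'n"
  assume "(A_mat \<alpha> \<beta> + k *\<^sub>R mat 1) *v v = 0"
  then have coord: "(\<alpha> + \<beta> + k) * v $ i = \<beta> * sum (($) v) UNIV" for i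
    using A_mat_shift_mult_nth[of \<alpha> \<beta> k v i] by (simp add: vec_eq_iff)
  have "(\<Sum>i\<in>UNIV. (\<alpha> + \<beta> + k) * v $ i) = (\<Sum>i\<in>(UNIV::'n set). \<beta> * sum (($) v) UNIV)"
    using coord by simp
  then have "(\<alpha> + \<beta> + k) * sum (($) v) UNIV = real CARD('n) * \<beta> * sum (($) v) UNIV"
    by (simp add: sum_distrib_left mult.assoc)
  then have "(\<alpha> + \<beta> + k - real CARD('n) * \<beta>) * sum (($) v) UNIV = 0"
    by (simp add: algebra_simps)
  then have "sum (($) v) UNIV = 0"
    using assms(2) by simp
  then show "v = 0"
    using coord assms(1) by (simp add: vec_eq_iff)
qed

lemma invertible_A_mat_shift_nonneg:
  assumes "\<beta> \<ge> 0" "(real CARD('n::finite) - 1) * \<beta> < \<alpha>" "k \<ge> 0"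
  shows "invertible (A_mat \<alpha> \<beta> + k *\<^sub>R mat 1 :: real^'n^'n)"
proof (rule invertible_A_mat_shift)
  have "(real CARD('n) - 1) * \<beta> \<ge> 0"
    using assms(1) by simp
  moreover have "(real CARD('n) - 1) * \<beta> = real CARD('n) * \<beta> - \<beta>"
    by (simp add: algebra_simps)
  ultimately show "\<alpha> + \<beta> + k \<noteq> 0" "\<alpha> + \<beta> + k \<noteq> real CARD('n) * \<beta>"
    using assms by linarith+
qed

lemma invertible_A_mat:
  assumes "\<beta> \<ge> 0" "(real CARD('n::finite) - 1) * \<beta> < \<alpha>"
  shows "invertible (A_mat \<alpha> \<beta> :: real^'n^'n)"
  using invertible_A_mat_shift_nonneg[OF assms order_refl] by simp

lemma matrix_vector_mult_matrix_inv:
  fixes M :: "'a::field^'n^'n"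
  assumes "invertible M"
  shows "M *v (matrix_inv M *v b) = b"
proof -
  have "M ** matrix_inv M = mat 1"
    using assms unfolding invertible_def matrix_inv_def by (rule someI2_ex) auto
  then show ?thesis
    by (metis matrix_vector_mul_assoc matrix_vector_mul_lid)
qed

lemma demand_eq_nth:
  "demand D0 \<alpha> \<beta> ps pc i = (D0 *\<^sub>R E_vec - A_mat \<alpha> \<beta> *v (ps + pc)) $ i"
  by (simp add: demand_def A_mat_mult_nth E_vec_def sum_diff1 sum.distrib algebra_simps)

lemma U_ISP_eq_inner:
  "U_ISP D0 \<alpha> \<beta> pd ps pc = inner (D0 *\<^sub>R E_vec - A_mat \<alpha> \<beta> *v (ps + pc)) (ps + pd)"
  by (simp add: U_ISP_def inner_vec_def demand_eq_nth)

lemma U_ISP_add: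
  fixes ps pc pd h :: "real^'n::finite"
  shows "U_ISP D0 \<alpha> \<beta> pd (ps + h) pc = U_ISP D0 \<alpha> \<beta> pd ps pc
     + inner h (D0 *\<^sub>R E_vec - A_mat \<alpha> \<beta> *v (ps + pc) - A_mat \<alpha> \<beta> *v (ps + pd))
     - inner h (A_mat \<alpha> \<beta> *v h)"
proof -
  define d where "d = D0 *\<^sub>R E_vec - A_mat \<alpha> \<beta> *v (ps + pc)"
  define r where "r = ps + pd"
  have "U_ISP D0 \<alpha> \<beta> pd (ps + h) pc = inner (d - A_mat \<alpha> \<beta> *v h) (r + h)"
    unfolding U_ISP_eq_inner d_def r_def by (simp add: matrix_vector_right_distrib algebra_simps)
  also have "\<dots> = inner d r + inner h d - inner (A_mat \<alpha> \<beta> *v h) r - inner h (A_mat \<alpha> \<beta> *v h)"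
    by (simp add: inner_add_left inner_add_right inner_diff_right inner_commute)
  also have "\<dots> = inner d r + inner h (d - A_mat \<alpha> \<beta> *v r) - inner h (A_mat \<alpha> \<beta> *v h)"
    by (simp add: inner_A_mat_mult_commute inner_diff_right)
  finally show ?thesis
    unfolding U_ISP_eq_inner d_def r_def .
qed

lemma demand_add_axis:
  "demand D0 \<alpha> \<beta> ps (pc + axis i t) j = demand D0 \<alpha> \<beta> ps pc j - (if j = i then \<alpha> * t else - \<beta> * t)"
  by (simp add: demand_eq_nth matrix_vector_right_distrib A_mat_mult_axis_nth add.assoc)

lemma U_CP_add_axis:
  "U_CP D0 \<alpha> \<beta> pa pd ps (pc + axis i t) i = U_CP D0 \<alpha> \<beta> pa pd ps pc i
     + t * (demand D0 \<alpha> \<beta> ps pc i - \<alpha> * (pc $ i + pa $ i - pd $ i)) - \<alpha> * t\<^sup>2"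
  by (simp add: U_CP_def demand_add_axis algebra_simps power2_eq_square)

lemma vec_update_eq_add_axis: "(\<chi> j. if j = i then c else x $ j) = x + axis i (c - x $ i)"
  for x :: "'a::ab_group_add^'n"
  by (simp add: vec_eq_iff axis_def)

lemma feasible_shift_commute: "feasible D0 \<alpha> \<beta> (ps + h) pc = feasible D0 \<alpha> \<beta> ps (pc + h)"
  by (simp add: feasible_def demand_eq_nth add_ac)

lemma feasible_add_axis_nhd:
  fixes ps pc :: "real^'n::finite"
  assumes "feasible D0 \<alpha> \<beta> ps pc"
  obtains \<delta> where "\<delta> > 0" "\<And>k t. \<bar>t\<bar> < \<delta> \<Longrightarrow> feasible D0 \<alpha> \<beta> ps (pc + axis k t)"
proof
  define m where "m = Min (range (demand D0 \<alpha> \<beta> ps pc))"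
  have m: "m > 0" "\<And>j. m \<le> demand D0 \<alpha> \<beta> ps pc j"
    using assms by (simp_all add: m_def feasible_def)
  show "m / (\<bar>\<alpha>\<bar> + \<bar>\<beta>\<bar> + 1) > 0"
    using m by simp
  fix k :: 'n and t assume t: "\<bar>t\<bar> < m / (\<bar>\<alpha>\<bar> + \<bar>\<beta>\<bar> + 1)"
  have "(if j = k then \<alpha> * t else - \<beta> * t) < m" for j
  proof -
    have "(if j = k then \<alpha> * t else - \<beta> * t) \<le> (\<bar>\<alpha>\<bar> + \<bar>\<beta>\<bar> + 1) * \<bar>t\<bar>"
      by (auto simp: abs_mult algebra_simps intro: order.trans[OF abs_ge_self])
    also have "\<dots> < m"
      using t by (simp add: field_simps)
    finally show ?thesis .
  qed
  then show "feasible D0 \<alpha> \<beta> ps (pc + axis k t)"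
    unfolding feasible_def demand_add_axis by (metis diff_gt_0_iff_gt less_le_trans m(2))
qed

lemma linear_coeff_eq_0_if_local_max:
  fixes g a \<delta> :: real
  assumes "\<delta> > 0" "\<And>t. \<bar>t\<bar> < \<delta> \<Longrightarrow> t * g - a * t\<^sup>2 \<le> 0"
  shows "g = 0"
proof -
  have "DERIV (\<lambda>t. t * g - a * t\<^sup>2) 0 :> g"
    by (auto intro!: derivative_eq_intros)
  then show ?thesis
    by (rule DERIV_local_max[OF _ assms(1)]) (use assms(2) in force)
qed

lemma is_equilibrium_imp_first_order:
  fixes pa pd ps pc :: "real^'n::finite"
  assumes eq: "is_equilibrium D0 \<alpha> \<beta> pa pd ps pc"
  shows "demand D0 \<alpha> \<beta> ps pc k = (A_mat \<alpha> \<beta> *v (ps + pd)) $ k"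
    and "demand D0 \<alpha> \<beta> ps pc k = \<alpha> * (pc $ k + pa $ k - pd $ k)"
proof -
  obtain \<delta> where \<delta>: "\<delta> > 0" "\<And>k t. \<bar>t\<bar> < \<delta> \<Longrightarrow> feasible D0 \<alpha> \<beta> ps (pc + axis k t)"
    using eq feasible_add_axis_nhd unfolding is_equilibrium_def by blast
  have "t * (demand D0 \<alpha> \<beta> ps pc k - (A_mat \<alpha> \<beta> *v (ps + pd)) $ k) - \<alpha> * t\<^sup>2 \<le> 0"
    if "\<bar>t\<bar> < \<delta>" for t
  proof -
    have "U_ISP D0 \<alpha> \<beta> pd (ps + axis k t) pc \<le> U_ISP D0 \<alpha> \<beta> pd ps pc"
      using eq \<delta>(2)[OF that] feasible_shift_commute unfolding is_equilibrium_def by blast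
    then show ?thesis
      unfolding U_ISP_add inner_axis_A_mat_mult_axis by (simp add: inner_axis' demand_eq_nth)
  qed
  then show "demand D0 \<alpha> \<beta> ps pc k = (A_mat \<alpha> \<beta> *v (ps + pd)) $ k"
    using linear_coeff_eq_0_if_local_max[OF \<delta>(1)] by fastforce
  have "t * (demand D0 \<alpha> \<beta> ps pc k - \<alpha> * (pc $ k + pa $ k - pd $ k)) - \<alpha> * t\<^sup>2 \<le> 0"
    if "\<bar>t\<bar> < \<delta>" for t
  proof -
    have "\<forall>c. feasible D0 \<alpha> \<beta> ps (pc + axis k (c - pc $ k)) \<longrightarrow>
        U_CP D0 \<alpha> \<beta> pa pd ps (pc + axis k (c - pc $ k)) k \<le> U_CP D0 \<alpha> \<beta> pa pd ps pc k"
      using eq unfolding is_equilibrium_def Let_def vec_update_eq_add_axis by blast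
    then have "U_CP D0 \<alpha> \<beta> pa pd ps (pc + axis k t) k \<le> U_CP D0 \<alpha> \<beta> pa pd ps pc k"
      using \<delta>(2)[OF that] by (metis add_diff_cancel_left')
    then show ?thesis
      by (simp add: U_CP_add_axis)
  qed
  then show "demand D0 \<alpha> \<beta> ps pc k = \<alpha> * (pc $ k + pa $ k - pd $ k)"
    using linear_coeff_eq_0_if_local_max[OF \<delta>(1)] by fastforce
qed

lemma first_order_imp_is_equilibrium:
  fixes pa pd ps pc :: "real^'n::finite"
  assumes "\<beta> \<ge> 0" "(real CARD('n) - 1) * \<beta> \<le> \<alpha>" "feasible D0 \<alpha> \<beta> ps pc"
    and isp: "\<And>k. demand D0 \<alpha> \<beta> ps pc k = (A_mat \<alpha> \<beta> *v (ps + pd)) $ k"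
    and cp: "\<And>k. demand D0 \<alpha> \<beta> ps pc k = \<alpha> * (pc $ k + pa $ k - pd $ k)"
  shows "is_equilibrium D0 \<alpha> \<beta> pa pd ps pc"
proof -
  have "U_ISP D0 \<alpha> \<beta> pd ps' pc \<le> U_ISP D0 \<alpha> \<beta> pd ps pc" for ps'
  proof -
    have "D0 *\<^sub>R E_vec - A_mat \<alpha> \<beta> *v (ps + pc) - A_mat \<alpha> \<beta> *v (ps + pd) = 0"
      using isp by (simp add: vec_eq_iff demand_eq_nth)
    then have "U_ISP D0 \<alpha> \<beta> pd (ps + (ps' - ps)) pc
        = U_ISP D0 \<alpha> \<beta> pd ps pc - inner (ps' - ps) (A_mat \<alpha> \<beta> *v (ps' - ps))"
      by (simp only: U_ISP_add inner_zero_right add_0_right)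
    then show ?thesis
      using A_mat_psd[OF assms(1,2), of "ps' - ps"] by simp
  qed
  moreover have "U_CP D0 \<alpha> \<beta> pa pd ps (pc + axis i t) i \<le> U_CP D0 \<alpha> \<beta> pa pd ps pc i" for i t
  proof -
    have "(real CARD('n) - 1) * \<beta> \<ge> 0"
      using assms(1) by simp
    then have "\<alpha> \<ge> 0"
      using assms(2) by linarith
    then show ?thesis
      by (simp add: U_CP_add_axis cp)
  qed
  ultimately show ?thesis
    using assms(3) by (simp add: is_equilibrium_def Let_def vec_update_eq_add_axis)
qed

lemma first_order_system_iff:
  fixes x y pa s r :: "real^'n::finite"
  assumes "\<beta> \<ge> 0" "(real CARD('n) - 1) * \<beta> < \<alpha>"
    and s: "(A_mat \<alpha> \<beta> + (2 * \<alpha>) *\<^sub>R mat 1) *v s = D0 *\<^sub>R E_vec + A_mat \<alpha> \<beta> *v pa"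
    and r: "A_mat \<alpha> \<beta> *v r = \<alpha> *\<^sub>R s"
  shows "D0 *\<^sub>R E_vec - A_mat \<alpha> \<beta> *v (x + y - pa) = A_mat \<alpha> \<beta> *v x
       \<and> D0 *\<^sub>R E_vec - A_mat \<alpha> \<beta> *v (x + y - pa) = \<alpha> *\<^sub>R y
     \<longleftrightarrow> x = r \<and> y = s"
proof -
  let ?A = "A_mat \<alpha> \<beta> :: real^'n^'n"
  have "(real CARD('n) - 1) * \<beta> \<ge> 0"
    using assms(1) by simp
  then have "\<alpha> > 0"
    using assms(2) by linarith
  then have "invertible (?A + (2 * \<alpha>) *\<^sub>R mat 1)" "invertible ?A"
    using assms(1,2) by (simp_all add: invertible_A_mat_shift_nonneg invertible_A_mat)
  then have inj: "inj ((*v) (?A + (2 * \<alpha>) *\<^sub>R mat 1))" "inj ((*v) ?A)"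
    by (simp_all add: inj_matrix_vector_mult)
  have s': "D0 *\<^sub>R E_vec = ?A *v s + \<alpha> *\<^sub>R s + \<alpha> *\<^sub>R s - ?A *v pa"
    using s unfolding A_mat_shift_mult unfolding mult_2 scaleR_add_left by (simp add: eq_diff_eq add.assoc)
  show ?thesis
  proof
    assume H: "D0 *\<^sub>R E_vec - ?A *v (x + y - pa) = ?A *v x \<and> D0 *\<^sub>R E_vec - ?A *v (x + y - pa) = \<alpha> *\<^sub>R y"
    then have Ax: "?A *v x = \<alpha> *\<^sub>R y"
      by metis
    have "\<alpha> *\<^sub>R y = D0 *\<^sub>R E_vec - \<alpha> *\<^sub>R y - ?A *v y + ?A *v pa"
      using H unfolding matrix_vector_right_distrib matrix_vector_mult_diff_distrib Ax by simp
    then have "?A *v y + \<alpha> *\<^sub>R y + \<alpha> *\<^sub>R y = ?A *v s + \<alpha> *\<^sub>R s + \<alpha> *\<^sub>R s"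
      unfolding s' by (simp add: eq_diff_eq diff_eq_eq add_ac)
    then have "(?A + (2 * \<alpha>) *\<^sub>R mat 1) *v y = (?A + (2 * \<alpha>) *\<^sub>R mat 1) *v s"
      unfolding A_mat_shift_mult unfolding mult_2 scaleR_add_left add.assoc .
    then have "y = s"
      using injD[OF inj(1)] by blast
    moreover from this have "?A *v x = ?A *v r"
      using Ax r by simp
    ultimately show "x = r \<and> y = s"
      using injD[OF inj(2)] by blast
  next
    assume "x = r \<and> y = s"
    then show "D0 *\<^sub>R E_vec - ?A *v (x + y - pa) = ?A *v x \<and> D0 *\<^sub>R E_vec - ?A *v (x + y - pa) = \<alpha> *\<^sub>R y"
      unfolding s' using r by (simp add: algebra_simps)
  qed
qed

lemma is_equilibrium_iff_closed_form:
  fixes pa pd ps pc s r :: "real^'n::finite"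
  assumes "\<beta> \<ge> 0" "(real CARD('n) - 1) * \<beta> < \<alpha>"
    and s: "(A_mat \<alpha> \<beta> + (2 * \<alpha>) *\<^sub>R mat 1) *v s = D0 *\<^sub>R E_vec + A_mat \<alpha> \<beta> *v pa"
    and r: "A_mat \<alpha> \<beta> *v r = \<alpha> *\<^sub>R s"
  shows "is_equilibrium D0 \<alpha> \<beta> pa pd ps pc \<longleftrightarrow> (\<forall>i. s $ i > 0) \<and> ps = r - pd \<and> pc = s - pa + pd"
proof -
  have "(real CARD('n) - 1) * \<beta> \<ge> 0"
    using assms(1) by simp
  then have "\<alpha> > 0"
    using assms(2) by linarith
  have "ps + pc = (ps + pd) + (pc + pa - pd) - pa"
    by simp
  then have first_order_iff:
    "(\<forall>k. demand D0 \<alpha> \<beta> ps pc k = (A_mat \<alpha> \<beta> *v (ps + pd)) $ k) \<and>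
     (\<forall>k. demand D0 \<alpha> \<beta> ps pc k = \<alpha> * (pc $ k + pa $ k - pd $ k))
     \<longleftrightarrow> ps + pd = r \<and> pc + pa - pd = s"
    using first_order_system_iff[OF assms, of "ps + pd" "pc + pa - pd"]
    by (simp add: vec_eq_iff demand_eq_nth)
  have "is_equilibrium D0 \<alpha> \<beta> pa pd ps pc \<longleftrightarrow> feasible D0 \<alpha> \<beta> ps pc \<and> ps + pd = r \<and> pc + pa - pd = s"
    using is_equilibrium_imp_first_order[of D0 \<alpha> \<beta> pa pd ps pc]
      first_order_imp_is_equilibrium[OF assms(1) less_imp_le[OF assms(2)], of D0 ps pc pd pa]
      first_order_iff
    unfolding is_equilibrium_def by blast
  also have "\<dots> \<longleftrightarrow> (\<forall>i. s $ i > 0) \<and> ps + pd = r \<and> pc + pa - pd = s"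
    using first_order_iff \<open>\<alpha> > 0\<close> by (auto simp: feasible_def zero_less_mult_iff)
  finally show ?thesis
    by (auto simp: algebra_simps)
qed

theorem theorem3:
  fixes D0 \<alpha> \<beta> :: real and pa :: "real^'n::finite"
  assumes "CARD('n) \<ge> 2" and "D0 > 0" and "\<alpha> > (real CARD('n) - 1) * \<beta>" and "\<beta> > 0"
    and "\<forall>i. pa$i \<ge> 0"
  shows "(\<forall>pd. (\<exists>ps pc. is_equilibrium D0 \<alpha> \<beta> pa pd ps pc) \<longleftrightarrow>
            (\<forall>i. (matrix_inv (A_mat \<alpha> \<beta> + (2 * \<alpha>) *\<^sub>R mat 1)
                    *v (D0 *\<^sub>R E_vec + A_mat \<alpha> \<beta> *v pa)) $ i > 0))
    \<and> ((\<forall>i. (matrix_inv (A_mat \<alpha> \<beta> + (2 * \<alpha>) *\<^sub>R mat 1)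
                    *v (D0 *\<^sub>R E_vec + A_mat \<alpha> \<beta> *v pa)) $ i > 0) \<longrightarrow>
        (\<forall>pd. \<exists>!q. is_equilibrium D0 \<alpha> \<beta> pa pd (fst q) (snd q))
      \<and> (\<exists>g h :: real^'n. \<forall>pd ps pc. is_equilibrium D0 \<alpha> \<beta> pa pd ps pc \<longrightarrow>
            (\<forall>i. ps$i = g$i - pd$i \<and> pc$i = h$i + pd$i))
      \<and> (\<exists>x :: real^'n. \<forall>pd ps pc. is_equilibrium D0 \<alpha> \<beta> pa pd ps pc \<longrightarrow>
            (\<forall>i. ps$i + pc$i = x$i))
      \<and> (\<exists>dv :: real^'n. \<forall>pd ps pc. is_equilibrium D0 \<alpha> \<beta> pa pd ps pc \<longrightarrow>
            (\<forall>i. demand D0 \<alpha> \<beta> ps pc i = dv$i))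
      \<and> (\<exists>rs rc :: real^'n. \<forall>pd ps pc. is_equilibrium D0 \<alpha> \<beta> pa pd ps pc \<longrightarrow>
            (\<forall>i. ps$i + pd$i = rs$i \<and> pc$i + pa$i - pd$i = rc$i))
      \<and> (\<exists>ui :: real. \<exists>uc :: real^'n. \<forall>pd ps pc. is_equilibrium D0 \<alpha> \<beta> pa pd ps pc \<longrightarrow>
            U_ISP D0 \<alpha> \<beta> pd ps pc = ui \<and> (\<forall>i. U_CP D0 \<alpha> \<beta> pa pd ps pc i = uc$i)))"
proof -
  have \<beta>: "\<beta> \<ge> 0" "(real CARD('n) - 1) * \<beta> < \<alpha>"
    using assms(3,4) by simp_all
  define s where "s = matrix_inv (A_mat \<alpha> \<beta> + (2 * \<alpha>) *\<^sub>R mat 1) *v (D0 *\<^sub>R E_vec + A_mat \<alpha> \<beta> *v pa)"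
  define r where "r = matrix_inv (A_mat \<alpha> \<beta>) *v (\<alpha> *\<^sub>R s)"
  have "(real CARD('n) - 1) * \<beta> \<ge> 0"
    using assms(4) by simp
  then have "\<alpha> > 0"
    using assms(3) by linarith
  then have s: "(A_mat \<alpha> \<beta> + (2 * \<alpha>) *\<^sub>R mat 1) *v s = D0 *\<^sub>R E_vec + A_mat \<alpha> \<beta> *v pa"
    unfolding s_def using \<beta> by (simp add: matrix_vector_mult_matrix_inv invertible_A_mat_shift_nonneg)
  have r: "A_mat \<alpha> \<beta> *v r = \<alpha> *\<^sub>R s"
    unfolding r_def using \<beta> by (simp add: matrix_vector_mult_matrix_inv invertible_A_mat)
  note eq_iff = is_equilibrium_iff_closed_form[OF \<beta> s r]
  have eq_values: "ps + pd = r \<and> pc + pa - pd = s \<and> (\<forall>i. demand D0 \<alpha> \<beta> ps pc i = \<alpha> * s $ i)"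
    if "is_equilibrium D0 \<alpha> \<beta> pa pd ps pc" for pd ps pc
    using that eq_iff is_equilibrium_imp_first_order(2)[OF that] by auto
  show ?thesis
    unfolding s_def[symmetric]
  proof (intro conjI impI)
    show "\<forall>pd. (\<exists>ps pc. is_equilibrium D0 \<alpha> \<beta> pa pd ps pc) \<longleftrightarrow> (\<forall>i. s $ i > 0)"
      using eq_iff by blast
    assume "\<forall>i. s $ i > 0"
    then show "\<forall>pd. \<exists>!q. is_equilibrium D0 \<alpha> \<beta> pa pd (fst q) (snd q)"
      using eq_iff by (metis prod.collapse prod.inject surj_pair)
    show "\<exists>g h :: real^'n. \<forall>pd ps pc. is_equilibrium D0 \<alpha> \<beta> pa pd ps pc \<longrightarrow>
        (\<forall>i. ps $ i = g $ i - pd $ i \<and> pc $ i = h $ i + pd $ i)"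
      using eq_iff by (rule_tac exI[of _ r], rule_tac exI[of _ "s - pa"]) auto
    show "\<exists>x :: real^'n. \<forall>pd ps pc. is_equilibrium D0 \<alpha> \<beta> pa pd ps pc \<longrightarrow> (\<forall>i. ps $ i + pc $ i = x $ i)"
      using eq_iff by (intro exI[of _ "r + s - pa"]) auto
    show "\<exists>dv :: real^'n. \<forall>pd ps pc. is_equilibrium D0 \<alpha> \<beta> pa pd ps pc \<longrightarrow>
        (\<forall>i. demand D0 \<alpha> \<beta> ps pc i = dv $ i)"
      using eq_values by (intro exI[of _ "\<alpha> *\<^sub>R s"]) auto
    show "\<exists>rs rc :: real^'n. \<forall>pd ps pc. is_equilibrium D0 \<alpha> \<beta> pa pd ps pc \<longrightarrow>
        (\<forall>i. ps $ i + pd $ i = rs $ i \<and> pc $ i + pa $ i - pd $ i = rc $ i)"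
      by (rule_tac exI[of _ r], rule_tac exI[of _ s]) (auto dest!: eq_values simp: vec_eq_iff)
    show "\<exists>ui uc. \<forall>pd ps pc. is_equilibrium D0 \<alpha> \<beta> pa pd ps pc \<longrightarrow>
        U_ISP D0 \<alpha> \<beta> pd ps pc = ui \<and> (\<forall>i. U_CP D0 \<alpha> \<beta> pa pd ps pc i = uc $ i)"
      using eq_values
      by (intro exI[of _ "\<Sum>i\<in>UNIV. \<alpha> * s $ i * r $ i"] exI[of _ "\<chi> i. \<alpha> * s $ i * s $ i"])
        (auto simp: U_ISP_def U_CP_def vec_eq_iff)
  qed
qed

end
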